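(* Let $n>p\ge 2$ and consider the linear model $\mathbf{y}=\mathbf{X}\boldsymbol{\beta}+\boldsymbol{\varepsilon}$, where $\mathbf{X}=[\mathbf{x}_1,\dots,\mathbf{x}_p]$ is a known $n\times p$ matrix with linearly independent columns, each column having mean $0$ and Euclidean length $1$, $\boldsymbol{\beta}=(\beta_1,\dots,\beta_p)^T$ is unknown, and $E(\boldsymbol{\varepsilon})=\mathbf{0}$, $\mathrm{var}(\boldsymbol{\varepsilon})=\mathbf{I}$. Suppose there is a constant $r>0$ with $\mathrm{corr}(\mathbf{x}_i,\mathbf{x}_j)=r$ for all $i\ne j$. Let $\hat{\boldsymbol{\beta}}=(\mathbf{X}^T\mathbf{X})^{-1}\mathbf{X}^T\mathbf{y}$, and for $\mathbf{w}$ in the simplex $W=\{\mathbf{w}\in\mathbb{R}^p: w_i\ge0,\ \sum_i w_i=1\}$ write $\mathrm{var}(\hat{\xi}(\mathbf{w}),r)$ for the variance of $\mathbf{w}^T\hat{\boldsymbol{\beta}}$ (which depends only on $p$, $r$ and $\mathbf{w}$). Let $\mathbf{w}_0=(1/p,\dots,1/p)^T$ and $\hat\tau_a=\mathbf{w}_0^T\hat{\boldsymbol\beta}=\frac1p\sum_{i=1}^p\hat\beta_i$, the estimator of the average group effect $\tau_a=\frac1p\sum_{i=1}^p\beta_i$. Then for each fixed $r$, $$\mathrm{var}(\hat{\tau}_a,r)=\mathrm{var}(\hat{\xi}(\mathbf{w}_0),r)=\min_{\mathbf{w}\in W}\mathrm{var}(\hat{\xi}(\mathbf{w}),r).$$ Also,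 $\mathrm{var}(\hat{\tau}_a,r)$, as a function of $r\in(0,1)$, is strictly monotone decreasing with $\lim_{r\to1}\mathrm{var}(\hat{\tau}_a,r)=1/p^2$. Further, among the variances $\mathrm{var}(\hat{\xi}(\mathbf{w}),r)$, $\mathbf{w}\in W$, the variance $\mathrm{var}(\hat{\tau}_a,r)$ is the only one that remains bounded as $r\to1$; i.e., for every fixed $\mathbf{w}\in W$ with $\mathbf{w}\ne\mathbf{w}_0$, $\mathrm{var}(\hat{\xi}(\mathbf{w}),r)$ is unbounded as $r\to 1$.
   Context: The variance of $\mathbf{w}^T\hat{\boldsymbol\beta}$ in this model equals $\mathbf{w}^T(\mathbf{X}^T\mathbf{X})^{-1}\mathbf{w}$, where $\mathbf{X}^T\mathbf{X}$ has $1$ on the diagonal and $r$ off the diagonal; hence it is a function of $p$, $r$ and $\mathbf{w}$ only. *)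

theory Defs
  imports "HOL-Analysis.Analysis"
begin

definition sample_mean :: "real^'n \<Rightarrow> real" where
  "sample_mean x = (\<Sum>k\<in>UNIV. x $ k) / real CARD('n)"

definition corr :: "real^'n \<Rightarrow> real^'n \<Rightarrow> real" where
  "corr x y =
     (\<Sum>k\<in>UNIV. (x $ k - sample_mean x) * (y $ k - sample_mean y)) /
     sqrt ((\<Sum>k\<in>UNIV. (x $ k - sample_mean x)^2) * (\<Sum>k\<in>UNIV. (y $ k - sample_mean y)^2))"

definition simplex_W :: "(real^'p) set" where
  "simplex_W = {w. (\<forall>i. 0 \<le> w $ i) \<and> (\<Sum>i\<in>UNIV. w $ i) = 1}"

definition w0 :: "real^'p" where
  "w0 = (\<chi> i. 1 / real CARD('p))"

text \<open>Variance of w^T betahat for design matrix X (with var(eps) = I):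
  w^T (X^T X)^{-1} w.\<close>
definition var_est :: "real^'p^'n \<Rightarrow> real^'p \<Rightarrow> real" where
  "var_est X w = w \<bullet> (matrix_inv (transpose X ** X) *v w)"

definition corr_matrix :: "real \<Rightarrow> real^'p^'p" where
  "corr_matrix r = (\<chi> i j. if i = j then 1 else r)"

definition var_xi :: "real \<Rightarrow> real^'p \<Rightarrow> real" where
  "var_xi r w = w \<bullet> (matrix_inv (corr_matrix r :: real^'p^'p) *v w)"

end

theory Submission
  imports Defs
begin

text \<open>
  For \<open>s \<noteq> 1\<close> the matrix \<open>corr_matrix s = (1 - s) I + s J\<close> (\<open>J\<close> the all-ones matrix) has the
  explicit inverse \<open>((I - c J) / (1 - s))\<close> with \<open>c = s / (1 + (p - 1) s)\<close>, so for weights summing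
  to one \<open>var_xi s w = (w \<bullet> w - c) / (1 - s)\<close>. Over the simplex \<open>w \<bullet> w\<close> is minimised exactly at
  the barycentre \<open>w0\<close>, where \<open>w0 \<bullet> w0 = 1/p\<close> and the numerator \<open>1/p - c\<close> carries the factor
  \<open>1 - s\<close>, giving \<open>var_xi s w0 = 1 / (p (1 + (p - 1) s))\<close>. For every other \<open>w\<close> the numerator
  stays bounded away from zero as \<open>s \<rightarrow> 1\<close>, so the variance diverges. Finally \<open>X\<^sup>T X\<close> is
  \<open>corr_matrix r\<close> because the columns are centred unit vectors, and \<open>r < 1\<close> because \<open>X\<close> is
  injective on \<open>e\<^sub>i - e\<^sub>j\<close>, an eigenvector of \<open>corr_matrix r\<close> with eigenvalue \<open>1 - r\<close>.
\<close>

lemma corr_matrix_mult_vec: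
  "(corr_matrix s *v (v::real^'p)) $ i = (1 - s) * v $ i + s * (\<Sum>j\<in>UNIV. v $ j)"
proof -
  have "(corr_matrix s *v v) $ i = (\<Sum>j\<in>UNIV. s * v $ j + (if i = j then (1 - s) * v $ j else 0))"
    unfolding matrix_vector_mult_def corr_matrix_def
    by (auto intro!: sum.cong simp: algebra_simps)
  also have "\<dots> = s * (\<Sum>j\<in>UNIV. v $ j) + (1 - s) * v $ i"
    by (simp add: sum.distrib sum_distrib_left)
  finally show ?thesis by simp
qed

lemma corr_matrix_mult_vec_inverse:
  fixes w :: "real^'p" and s :: real
  defines "c \<equiv> s * (\<Sum>j\<in>UNIV. w $ j) / (1 + (real CARD('p) - 1) * s)"
  assumes s1: "s \<noteq> 1" and D: "1 + (real CARD('p) - 1) * s \<noteq> 0"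
  shows "corr_matrix s *v (\<chi> i. (w $ i - c) / (1 - s)) = w"
proof -
  let ?S = "\<Sum>j\<in>UNIV. w $ j" and ?p = "real CARD('p)"
  have sum_sol: "(\<Sum>j\<in>UNIV. (w $ j - c) / (1 - s)) = (?S - ?p * c) / (1 - s)"
    by (simp add: sum_divide_distrib[symmetric] sum_subtractf)
  have "?S - ?p * c = ?S * (1 - s) / (1 + (?p - 1) * s)"
    using D unfolding c_def by (simp add: field_simps)
  hence "s * (?S - ?p * c) = c * (1 - s)"
    unfolding c_def by simp
  hence "s * (?S - ?p * c) / (1 - s) = c"
    using s1 by (simp add: field_simps)
  thus ?thesis
    using s1 by (simp add: vec_eq_iff corr_matrix_mult_vec sum_sol)
qed

lemma matrix_inv_mult_vec_eqI:
  fixes M :: "real^'n^'n"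
  assumes "\<And>w. M *v sol w = w"
  shows "matrix_inv M *v w = sol w"
proof -
  have "surj ((*v) M)" using assms by (metis surjI)
  then obtain B where B: "M ** B = mat 1" using matrix_right_invertible_surjective by blast
  hence "B ** M = mat 1" using matrix_left_right_inverse by blast
  with B have "M ** matrix_inv M = mat 1 \<and> matrix_inv M ** M = mat 1"
    unfolding matrix_inv_def by (rule someI[where x = B, OF conjI])
  hence "matrix_inv M *v (M *v sol w) = sol w"
    by (metis matrix_vector_mul_assoc matrix_vector_mul_lid)
  thus ?thesis using assms by simp
qed

lemma var_xi_eq:
  fixes w :: "real^'p"
  assumes s1: "s \<noteq> 1" and D: "1 + (real CARD('p) - 1) * s \<noteq> 0"
  shows "var_xi s w
    = (w \<bullet> w - s * (\<Sum>j\<in>UNIV. w $ j)^2 / (1 + (real CARD('p) - 1) * s)) / (1 - s)"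
proof -
  define c where "c w = s * (\<Sum>j\<in>UNIV. w $ j) / (1 + (real CARD('p) - 1) * s)" for w :: "real^'p"
  have "matrix_inv (corr_matrix s :: real^'p^'p) *v w = (\<chi> i. (w $ i - c w) / (1 - s))"
    by (rule matrix_inv_mult_vec_eqI)
       (use corr_matrix_mult_vec_inverse[OF s1 D] in \<open>simp add: c_def\<close>)
  hence "var_xi s w = (\<Sum>i\<in>UNIV. w $ i * ((w $ i - c w) / (1 - s)))"
    by (simp add: var_xi_def inner_vec_def)
  also have "\<dots> = (w \<bullet> w - c w * (\<Sum>j\<in>UNIV. w $ j)) / (1 - s)"
    by (simp add: inner_vec_def sum_divide_distrib[symmetric] algebra_simps sum_subtractf
        sum_distrib_left sum_distrib_right)
  finally show ?thesis
    by (simp add: c_def power2_eq_square)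
qed

lemma var_xi_eq_sum_one:
  fixes w :: "real^'p"
  assumes "(\<Sum>i\<in>UNIV. w $ i) = 1" and "0 \<le> s" "s < 1"
  shows "var_xi s w = (w \<bullet> w - s / (1 + (real CARD('p) - 1) * s)) / (1 - s)"
proof -
  have "0 < 1 + (real CARD('p) - 1) * s"
    using assms by (simp add: add_pos_nonneg)
  thus ?thesis using var_xi_eq[of s w] assms by simp
qed

lemma sum_w0 [simp]: "(\<Sum>i\<in>UNIV. (w0 :: real^'p) $ i) = 1"
  by (simp add: w0_def)

lemma inner_w0_w0 [simp]: "(w0 :: real^'p) \<bullet> w0 = 1 / real CARD('p)"
  by (simp add: w0_def inner_vec_def power2_eq_square)

lemma w0_in_simplex_W: "(w0 :: real^'p) \<in> simplex_W"
  by (simp add: w0_def simplex_W_def)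

lemma inner_self_minus_inverse_card:
  fixes w :: "real^'p"
  assumes "(\<Sum>i\<in>UNIV. w $ i) = 1"
  shows "w \<bullet> w - 1 / real CARD('p) = (\<Sum>i\<in>UNIV. (w $ i - 1 / real CARD('p))^2)"
proof -
  let ?p = "real CARD('p)"
  have "(\<Sum>i\<in>UNIV. (w $ i - 1 / ?p)^2) = (\<Sum>i\<in>UNIV. (w $ i)^2 - 2 / ?p * w $ i + 1 / ?p^2)"
    by (intro sum.cong) (auto simp: power2_eq_square field_simps)
  also have "\<dots> = (\<Sum>i\<in>UNIV. (w $ i)^2) - 2 / ?p * (\<Sum>i\<in>UNIV. w $ i) + ?p / ?p^2"
    by (simp add: sum.distrib sum_subtractf sum_distrib_left)
  also have "\<dots> = w \<bullet> w - 1 / ?p"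
    using assms by (simp add: inner_vec_def power2_eq_square)
  finally show ?thesis by simp
qed

lemma inner_self_gt_inverse_card:
  fixes w :: "real^'p"
  assumes "(\<Sum>i\<in>UNIV. w $ i) = 1" and "w \<noteq> w0"
  shows "1 / real CARD('p) < w \<bullet> w"
proof -
  obtain k where k: "w $ k \<noteq> 1 / real CARD('p)"
    using assms(2) by (auto simp: vec_eq_iff w0_def)
  have "0 < (w $ k - 1 / real CARD('p))^2" using k by simp
  also have "\<dots> \<le> (\<Sum>i\<in>UNIV. (w $ i - 1 / real CARD('p))^2)"
    by (rule member_le_sum) auto
  finally show ?thesis using inner_self_minus_inverse_card[OF assms(1)] by simp
qed

lemma var_xi_w0:
  assumes "0 \<le> s" "s < 1"
  shows "var_xi s (w0 :: real^'p) = 1 / (real CARD('p) * (1 + (real CARD('p) - 1) * s))"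
proof -
  let ?p = "real CARD('p)"
  have "0 < 1 + (?p - 1) * s" using assms by (simp add: add_pos_nonneg)
  hence "1 / ?p - s / (1 + (?p - 1) * s) = (1 - s) / (?p * (1 + (?p - 1) * s))"
    by (simp add: field_simps)
  thus ?thesis
    using var_xi_eq_sum_one[OF sum_w0 assms, where 'p = 'p] assms by simp
qed

lemma var_xi_w0_le:
  fixes w :: "real^'p"
  assumes "w \<in> simplex_W" and "0 \<le> s" "s < 1"
  shows "var_xi s (w0 :: real^'p) \<le> var_xi s w"
proof -
  have sum1: "(\<Sum>i\<in>UNIV. w $ i) = 1" using assms(1) by (simp add: simplex_W_def)
  have "0 \<le> (\<Sum>i\<in>UNIV. (w $ i - 1 / real CARD('p))^2)"
    by (simp add: sum_nonneg)
  hence "1 / real CARD('p) \<le> w \<bullet> w"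
    using inner_self_minus_inverse_card[OF sum1] by simp
  thus ?thesis
    using var_xi_eq_sum_one[OF sum1 assms(2,3)] var_xi_eq_sum_one[OF sum_w0[where 'p = 'p] assms(2,3)] assms
    by (simp add: divide_right_mono)
qed

lemma strict_antimono_on_var_xi_w0:
  assumes "CARD('p) \<ge> 2"
  shows "strict_antimono_on {0<..<1} (\<lambda>s. var_xi s (w0 :: real^'p))"
proof (rule monotone_onI)
  let ?p = "real CARD('p)"
  fix a b :: real assume ab: "a \<in> {0<..<1}" "b \<in> {0<..<1}" "a < b"
  have "?p * (1 + (?p - 1) * a) < ?p * (1 + (?p - 1) * b)"
    using ab assms by (simp add: mult_strict_left_mono)
  moreover have "0 < ?p * (1 + (?p - 1) * a)"
    using ab assms by (simp add: add_pos_nonneg)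
  ultimately show "var_xi b (w0 :: real^'p) < var_xi a (w0 :: real^'p)"
    using ab by (simp add: var_xi_w0 frac_less2)
qed

lemma eventually_at_left_1_unit_interval: "\<forall>\<^sub>F s in at_left (1::real). 0 \<le> s \<and> s < 1"
  by (rule eventually_mono[OF eventually_at_left_real[of 0]]) auto

lemma var_xi_w0_tendsto:
  "((\<lambda>s. var_xi s (w0 :: real^'p)) \<longlongrightarrow> 1 / (real CARD('p))^2) (at_left 1)"
proof -
  let ?p = "real CARD('p)"
  have "((\<lambda>s. 1 / (?p * (1 + (?p - 1) * s))) \<longlongrightarrow> 1 / (?p * (1 + (?p - 1) * 1))) (at_left 1)"
    by (intro tendsto_intros) auto
  moreover have "\<forall>\<^sub>F s in at_left 1. 1 / (?p * (1 + (?p - 1) * s)) = var_xi s (w0 :: real^'p)"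
    by (rule eventually_mono[OF eventually_at_left_1_unit_interval]) (simp add: var_xi_w0)
  ultimately show ?thesis
    by (simp add: power2_eq_square tendsto_cong)
qed

lemma var_xi_tendsto_at_top:
  fixes w :: "real^'p"
  assumes "w \<in> simplex_W" and "w \<noteq> w0"
  shows "filterlim (\<lambda>s. var_xi s w) at_top (at_left 1)"
proof -
  let ?p = "real CARD('p)"
  have sum1: "(\<Sum>i\<in>UNIV. w $ i) = 1" using assms(1) by (simp add: simplex_W_def)
  have "((\<lambda>s. w \<bullet> w - s / (1 + (?p - 1) * s)) \<longlongrightarrow> w \<bullet> w - 1 / (1 + (?p - 1) * 1)) (at_left 1)"
    by (intro tendsto_intros) auto
  hence num: "((\<lambda>s. w \<bullet> w - s / (1 + (?p - 1) * s)) \<longlongrightarrow> w \<bullet> w - 1 / ?p) (at_left 1)"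
    by simp
  have "((\<lambda>s. 1 - s) \<longlongrightarrow> 0) (at_left (1::real))"
    by (intro tendsto_eq_intros) auto
  hence "filterlim (\<lambda>s. inverse (1 - s)) at_top (at_left (1::real))"
    by (rule filterlim_inverse_at_top)
       (rule eventually_mono[OF eventually_at_left_1_unit_interval], simp)
  hence "filterlim (\<lambda>s. (w \<bullet> w - s / (1 + (?p - 1) * s)) * inverse (1 - s)) at_top (at_left 1)"
    using filterlim_tendsto_pos_mult_at_top[OF num] inner_self_gt_inverse_card[OF sum1 assms(2)]
    by simp
  moreover have "\<forall>\<^sub>F s in at_left 1.
      (w \<bullet> w - s / (1 + (?p - 1) * s)) * inverse (1 - s) = var_xi s w"
    by (rule eventually_mono[OF eventually_at_left_1_unit_interval])
       (simp add: var_xi_eq_sum_one[OF sum1] divide_inverse)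
  ultimately show ?thesis
    by (simp add: filterlim_cong[OF refl refl])
qed

lemma gram_matrix_eq_corr_matrix:
  fixes X :: "real^'p^'n"
  assumes mean0: "\<forall>i. sample_mean (column i X) = 0"
    and len1: "\<forall>i. norm (column i X) = 1"
    and corr_r: "\<forall>i j. i \<noteq> j \<longrightarrow> corr (column i X) (column j X) = r"
  shows "transpose X ** X = corr_matrix r"
proof -
  have entry: "(transpose X ** X) $ i $ j = column i X \<bullet> column j X" for i j
    by (simp add: matrix_matrix_mult_def transpose_def column_def inner_vec_def)
  have diag: "column i X \<bullet> column i X = 1" for i
    using len1 by (simp add: dot_square_norm)
  have "corr (column i X) (column j X) = column i X \<bullet> column j X" for i j
    using mean0 diag by (simp add: corr_def inner_vec_def power2_eq_square)
  thus ?thesis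
    using corr_r by (simp add: vec_eq_iff entry corr_matrix_def diag)
qed

lemma corr_lt_1_if_injective:
  fixes X :: "real^'p^'n"
  assumes p2: "CARD('p) \<ge> 2"
    and indep: "\<forall>c. X *v c = 0 \<longrightarrow> c = 0"
    and G: "transpose X ** X = corr_matrix r"
  shows "r < 1"
proof -
  obtain i j :: 'p where ij: "i \<noteq> j"
    using p2 card_le_Suc0_iff_eq[of "UNIV :: 'p set"] by auto
  define c :: "real^'p" where "c = (\<chi> k. if k = i then 1 else if k = j then -1 else 0)"
  have "c \<noteq> 0" using ij by (auto simp: c_def vec_eq_iff)
  hence "X *v c \<noteq> 0" using indep by blast
  hence "(X *v c) \<bullet> (X *v c) > 0" by simp
  have sum_c: "(\<Sum>k\<in>UNIV. c $ k) = 0"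
    using ij by (simp add: c_def if_distrib sum.If_cases)
  have inner_c: "c \<bullet> c = 2"
    using ij by (simp add: c_def inner_vec_def if_distrib sum.If_cases)
  have "(X *v c) \<bullet> (X *v c) = c \<bullet> ((transpose X ** X) *v c)"
    by (metis dot_lmul_matrix matrix_vector_mul_assoc vector_transpose_matrix)
  also have "(transpose X ** X) *v c = (1 - r) *\<^sub>R c"
    by (simp add: G vec_eq_iff corr_matrix_mult_vec sum_c)
  finally have "(X *v c) \<bullet> (X *v c) = 2 * (1 - r)"
    by (simp add: inner_c)
  with \<open>(X *v c) \<bullet> (X *v c) > 0\<close> show ?thesis by simp
qed

theorem corollary2:
  fixes X :: "real^'p^'n" and r :: real
  assumes p2: "CARD('p) \<ge> 2"
    and np: "CARD('n) > CARD('p)"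
    and indep: "\<forall>c. X *v c = 0 \<longrightarrow> c = 0"
    and mean0: "\<forall>i. sample_mean (column i X) = 0"
    and len1: "\<forall>i. norm (column i X) = 1"
    and corr_r: "\<forall>i j. i \<noteq> j \<longrightarrow> corr (column i X) (column j X) = r"
    and rpos: "r > 0"
  shows "(\<forall>w. var_est X w = var_xi r w)
    \<and> (w0 :: real^'p) \<in> simplex_W
    \<and> (\<forall>w \<in> (simplex_W :: (real^'p) set). var_xi r (w0 :: real^'p) \<le> var_xi r w)
    \<and> strict_antimono_on {0<..<1} (\<lambda>s. var_xi s (w0 :: real^'p))
    \<and> ((\<lambda>s. var_xi s (w0 :: real^'p)) \<longlongrightarrow> 1 / (real CARD('p))^2) (at_left 1)
    \<and> (\<forall>w \<in> (simplex_W :: (real^'p) set). w \<noteq> w0 \<longrightarrow>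
         \<not> (\<exists>B. \<forall>\<^sub>F s in at_left 1. \<bar>var_xi s w\<bar> \<le> B))"
proof -
  have G: "transpose X ** X = corr_matrix r"
    using gram_matrix_eq_corr_matrix mean0 len1 corr_r by blast
  have "r < 1" using corr_lt_1_if_injective[OF p2 indep G] .
  have unbounded: "\<not> (\<exists>B. \<forall>\<^sub>F s in at_left 1. \<bar>var_xi s w\<bar> \<le> B)"
    if "w \<in> simplex_W" "w \<noteq> w0" for w :: "real^'p"
  proof
    assume "\<exists>B. \<forall>\<^sub>F s in at_left 1. \<bar>var_xi s w\<bar> \<le> B"
    then obtain B where "\<forall>\<^sub>F s in at_left 1. \<bar>var_xi s w\<bar> \<le> B" by blast
    moreover have "\<forall>\<^sub>F s in at_left 1. B < var_xi s w"
      using var_xi_tendsto_at_top[OF that] by (simp add: filterlim_at_top_dense)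
    ultimately have "\<forall>\<^sub>F s in at_left (1::real). False"
      by eventually_elim linarith
    thus False by simp
  qed
  have "\<forall>w \<in> simplex_W. var_xi r (w0 :: real^'p) \<le> var_xi r (w :: real^'p)"
    using rpos \<open>r < 1\<close> by (auto intro: var_xi_w0_le)
  with unbounded show ?thesis
    using w0_in_simplex_W strict_antimono_on_var_xi_w0[OF p2] var_xi_w0_tendsto[where 'p = 'p]
    by (simp add: var_est_def var_xi_def[symmetric] G)
qed

end
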